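(* In the setting of the context, let $a,b\in X$ and $c\in C$ be such that some geodesic from $a$ to $b$ does not intersect $B_{R+2\delta}(c)$. Then $d_c(a,b)\le 4\delta$.
   Context: $X$ is a $\delta$-hyperbolic geodesic metric space ($\delta>0$, every geodesic triangle $\delta$-thin). $G$ acts on $X$ by isometries and $\mathcal{C}=(C,\{G_c\})$ is a $\rho$-separated fairly rotating family with $\rho\ge20\delta$ (i.e. $C\subseteq X$ is $G$-invariant, $G_c$ fixes $c$, $G_{gc}=gG_cg^{-1}$, distinct points of $C$ are at distance $\ge\rho$, and for $c\in C$, $g\in G_c\setminus\{1\}$, $x\in C\setminus\{c\}$ some geodesic from $x$ to $gx$ meets the closed $1$-ball about $c$). Fix $2+2\delta\le R\le\frac\rho2-3\delta$; $B_r(p)$ denotes the open ball. For $p\in C$, $S_p=\{x:d(x,p)=R\}$ with metric $d_{S_p}(x,y)=$ infimum of lengths of paths from $x$ to $y$ in $X\setminus B_R(p)$ (possibly $\infty$). For $x$ with $d(x,p)\ge R$, $\pi_p(x)\subseteq S_p$ is the set of points where geodesics $[p,x]$ meet $S_p$ (equivalently nearest-point projections of $x$ to $S_p$), and $d_p(x,y)=\operatorname{diam}_{S_p}(\pi_p(x)\cup\pi_p(y))$. *)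

theory Defs
  imports "HOL-Analysis.Analysis" "HOL-Library.Extended_Real" "HOL-Algebra.Group"
begin

definition geod_seg :: "'a::metric_space \<Rightarrow> 'a \<Rightarrow> 'a set \<Rightarrow> bool" where
  "geod_seg x y S \<longleftrightarrow> (\<exists>\<gamma>::real \<Rightarrow> 'a. \<gamma> 0 = x \<and> \<gamma> (dist x y) = y \<and>
      (\<forall>s\<in>{0..dist x y}. \<forall>t\<in>{0..dist x y}. dist (\<gamma> s) (\<gamma> t) = \<bar>s - t\<bar>) \<and>
      S = \<gamma> ` {0..dist x y})"

definition geodesic_metric_space :: "'a::metric_space itself \<Rightarrow> bool" where
  "geodesic_metric_space _ \<longleftrightarrow> (\<forall>x y::'a. \<exists>S. geod_seg x y S)"

definition delta_thin :: "'a::metric_space itself \<Rightarrow> real \<Rightarrow> bool" where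
  "delta_thin _ \<delta> \<longleftrightarrow> (\<forall>(x::'a) y z Sxy Syz Szx.
      geod_seg x y Sxy \<and> geod_seg y z Syz \<and> geod_seg z x Szx \<longrightarrow>
      (\<forall>p\<in>Sxy. \<exists>q\<in>Syz \<union> Szx. dist p q \<le> \<delta>))"

definition isom_action :: "('g, 'b) monoid_scheme \<Rightarrow> ('g \<Rightarrow> 'a::metric_space \<Rightarrow> 'a) \<Rightarrow> bool" where
  "isom_action G act \<longleftrightarrow> group G \<and> act \<one>\<^bsub>G\<^esub> = id \<and>
     (\<forall>g\<in>carrier G. \<forall>h\<in>carrier G. act (g \<otimes>\<^bsub>G\<^esub> h) = act g \<circ> act h) \<and>
     (\<forall>g\<in>carrier G. \<forall>x y. dist (act g x) (act g y) = dist x y)"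

definition fairly_rotating_family ::
  "('g, 'b) monoid_scheme \<Rightarrow> ('g \<Rightarrow> 'a::metric_space \<Rightarrow> 'a) \<Rightarrow> 'a set \<Rightarrow> ('a \<Rightarrow> 'g set) \<Rightarrow> real \<Rightarrow> bool" where
  "fairly_rotating_family G act C Gc \<rho> \<longleftrightarrow>
     (\<forall>g\<in>carrier G. \<forall>c\<in>C. act g c \<in> C) \<and>
     (\<forall>c\<in>C. subgroup (Gc c) G \<and> (\<forall>g\<in>Gc c. act g c = c)) \<and>
     (\<forall>c\<in>C. \<forall>g\<in>carrier G. Gc (act g c) = {g \<otimes>\<^bsub>G\<^esub> h \<otimes>\<^bsub>G\<^esub> inv\<^bsub>G\<^esub> g | h. h \<in> Gc c}) \<and>
     (\<forall>c\<in>C. \<forall>c'\<in>C. c \<noteq> c' \<longrightarrow> \<rho> \<le> dist c c') \<and>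
     (\<forall>c\<in>C. \<forall>g\<in>Gc c - {\<one>\<^bsub>G\<^esub>}. \<forall>x\<in>C - {c}.
        \<exists>S. geod_seg x (act g x) S \<and> (\<exists>z\<in>S. dist z c \<le> 1))"

definition path_len :: "(real \<Rightarrow> 'a::metric_space) \<Rightarrow> ereal" where
  "path_len \<gamma> = Sup {ereal (\<Sum>i<n. dist (\<gamma> (t i)) (\<gamma> (t (Suc i)))) | n t.
      t 0 = 0 \<and> t n = 1 \<and> (\<forall>i<n. t i \<le> t (Suc i))}"

text \<open>Induced path metric on the sphere S_p: infimum of lengths of paths from x to y
  in X minus the open ball B_R(p) (infinity if there is none).\<close>
definition sphere_dist :: "real \<Rightarrow> 'a::metric_space \<Rightarrow> 'a \<Rightarrow> 'a \<Rightarrow> ereal" where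
  "sphere_dist R p x y = Inf {path_len \<gamma> | \<gamma>. continuous_on {0..1} \<gamma> \<and> \<gamma> 0 = x \<and> \<gamma> 1 = y \<and>
      \<gamma> ` {0..1} \<subseteq> - ball p R}"

definition sphere_proj :: "real \<Rightarrow> 'a::metric_space \<Rightarrow> 'a \<Rightarrow> 'a set" where
  "sphere_proj R p x = {z. dist z p = R \<and> (\<exists>S. geod_seg p x S \<and> z \<in> S)}"

definition proj_dist :: "real \<Rightarrow> 'a::metric_space \<Rightarrow> 'a \<Rightarrow> 'a \<Rightarrow> ereal" where
  "proj_dist R p x y = Sup {sphere_dist R p u v | u v.
      u \<in> sphere_proj R p x \<union> sphere_proj R p y \<and> v \<in> sphere_proj R p x \<union> sphere_proj R p y}"

end

theory Submission
  imports Defs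
begin

text \<open>Let \<open>u\<close>, \<open>v\<close> lie on geodesics \<open>[c,p]\<close>, \<open>[c,q]\<close> at distance \<open>R\<close> from \<open>c\<close>, where \<open>p, q\<close> are
  endpoints of a geodesic \<open>[p,q]\<close> avoiding \<open>B\<^sub>R\<^sub>+\<^sub>2\<^sub>\<delta>(c)\<close>. In the thin triangle \<open>c p q\<close> the point
  \<open>u'\<close> of \<open>[c,p]\<close> at distance \<open>R + \<delta>\<close> from \<open>c\<close> cannot be \<open>\<delta>\<close>-close to \<open>[p,q]\<close>, so it is
  \<open>\<delta>\<close>-close to a point \<open>y\<close> of \<open>[c,q]\<close>, and then \<open>R \<le> d(c,y) \<le> R + 2\<delta>\<close>. The path going out
  from \<open>u\<close> to \<open>u'\<close>, across to \<open>y\<close> and back in along \<open>[c,q]\<close> to \<open>v\<close> avoids \<open>B\<^sub>R(c)\<close> and has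
  length at most \<open>\<delta> + \<delta> + 2\<delta>\<close>.\<close>

lemma path_len_le_lipschitz:
  fixes \<gamma> :: "real \<Rightarrow> 'a::metric_space"
  assumes "L-lipschitz_on {0..1} \<gamma>"
  shows "path_len \<gamma> \<le> ereal L"
  unfolding path_len_def
proof (rule Sup_least, clarsimp)
  fix n and t :: "nat \<Rightarrow> real"
  assume t0: "t 0 = 0" and tn: "t n = 1" and mono: "\<forall>i<n. t i \<le> t (Suc i)"
  have "0 \<le> t i" if "i \<le> n" for i
    using le0[of i]
  proof (induction i rule: dec_induct)
    case (step k)
    then show ?case using mono that by (metis order.strict_trans2 order.trans)
  qed (simp add: t0)
  moreover have "t i \<le> 1" if "i \<le> n" for i
    using that
  proof (induction i rule: inc_induct)
    case (step k)
    then show ?case using mono by (metis order.trans)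
  qed (simp add: tn)
  ultimately have t01: "t i \<in> {0..1}" if "i \<le> n" for i
    using that by auto
  have "(\<Sum>i<n. dist (\<gamma> (t i)) (\<gamma> (t (Suc i)))) \<le> (\<Sum>i<n. L * (t (Suc i) - t i))"
  proof (rule sum_mono)
    fix i assume "i \<in> {..<n}"
    then show "dist (\<gamma> (t i)) (\<gamma> (t (Suc i))) \<le> L * (t (Suc i) - t i)"
      using lipschitz_onD[OF assms, of "t i" "t (Suc i)"] t01[of i] t01[of "Suc i"] mono
      by (auto simp: dist_real_def)
  qed
  also have "\<dots> = L"
    by (simp add: sum_distrib_left[symmetric] sum_lessThan_telescope t0 tn)
  finally show "(\<Sum>i<n. dist (\<gamma> (t i)) (\<gamma> (t (Suc i)))) \<le> L" .
qed

definition outside_path :: "real \<Rightarrow> 'a::metric_space \<Rightarrow> real \<Rightarrow> 'a \<Rightarrow> 'a \<Rightarrow> bool" where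
  "outside_path R c T x y \<longleftrightarrow> 0 \<le> T \<and>
     (\<exists>\<sigma>. 1-lipschitz_on {0..T} \<sigma> \<and> \<sigma> 0 = x \<and> \<sigma> T = y \<and> \<sigma> ` {0..T} \<subseteq> - ball c R)"

lemma outside_path_sphere_dist:
  assumes "outside_path R c T x y"
  shows "sphere_dist R c x y \<le> ereal T"
proof -
  obtain \<sigma> where T: "0 \<le> T" and \<sigma>: "1-lipschitz_on {0..T} \<sigma>" "\<sigma> 0 = x" "\<sigma> T = y"
    "\<sigma> ` {0..T} \<subseteq> - ball c R"
    using assms unfolding outside_path_def by blast
  define \<gamma> where "\<gamma> = (\<lambda>s. \<sigma> (T * s))"
  have scale: "(\<lambda>s. T * s) ` {0..1} \<subseteq> {0..T}"
    using T by (auto simp: mult_left_le)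
  have "T-lipschitz_on {0..1} (\<lambda>s. T * s)"
    using T by (intro lipschitz_onI) (auto simp: dist_real_def abs_mult right_diff_distrib[symmetric])
  then have "(1 * T)-lipschitz_on {0..1} \<gamma>"
    unfolding \<gamma>_def by (rule lipschitz_on_compose2) (rule lipschitz_on_subset[OF \<sigma>(1) scale])
  then have L: "T-lipschitz_on {0..1} \<gamma>" by simp
  have "\<gamma> ` {0..1} \<subseteq> - ball c R" "\<gamma> 0 = x" "\<gamma> 1 = y"
    using \<sigma>(2-4) scale by (auto simp: \<gamma>_def)
  then have "sphere_dist R c x y \<le> path_len \<gamma>"
    unfolding sphere_dist_def using lipschitz_on_continuous_on[OF L]
    by (intro Inf_lower) blast
  also have "\<dots> \<le> ereal T" by (rule path_len_le_lipschitz[OF L])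
  finally show ?thesis .
qed

lemma outside_path_trans:
  assumes "outside_path R c T\<^sub>1 x y" and "outside_path R c T\<^sub>2 y z"
  shows "outside_path R c (T\<^sub>1 + T\<^sub>2) x z"
proof -
  obtain \<sigma>\<^sub>1 where T\<^sub>1: "0 \<le> T\<^sub>1" and \<sigma>\<^sub>1: "1-lipschitz_on {0..T\<^sub>1} \<sigma>\<^sub>1" "\<sigma>\<^sub>1 0 = x" "\<sigma>\<^sub>1 T\<^sub>1 = y"
    "\<sigma>\<^sub>1 ` {0..T\<^sub>1} \<subseteq> - ball c R"
    using assms(1) unfolding outside_path_def by blast
  obtain \<sigma>\<^sub>2 where T\<^sub>2: "0 \<le> T\<^sub>2" and \<sigma>\<^sub>2: "1-lipschitz_on {0..T\<^sub>2} \<sigma>\<^sub>2" "\<sigma>\<^sub>2 0 = y" "\<sigma>\<^sub>2 T\<^sub>2 = z"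
    "\<sigma>\<^sub>2 ` {0..T\<^sub>2} \<subseteq> - ball c R"
    using assms(2) unfolding outside_path_def by blast
  have "1-lipschitz_on {T\<^sub>1..T\<^sub>1 + T\<^sub>2} (\<lambda>t. \<sigma>\<^sub>2 (t - T\<^sub>1))"
  proof (rule lipschitz_onI)
    fix s t assume "s \<in> {T\<^sub>1..T\<^sub>1 + T\<^sub>2}" "t \<in> {T\<^sub>1..T\<^sub>1 + T\<^sub>2}"
    then show "dist (\<sigma>\<^sub>2 (s - T\<^sub>1)) (\<sigma>\<^sub>2 (t - T\<^sub>1)) \<le> 1 * dist s t"
      using lipschitz_onD[OF \<sigma>\<^sub>2(1), of "s - T\<^sub>1" "t - T\<^sub>1"] by (auto simp: dist_real_def)
  qed simp
  then have "1-lipschitz_on {0..T\<^sub>1 + T\<^sub>2} (\<lambda>t. if t \<le> T\<^sub>1 then \<sigma>\<^sub>1 t else \<sigma>\<^sub>2 (t - T\<^sub>1))"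
    using \<sigma>\<^sub>1 \<sigma>\<^sub>2 by (intro lipschitz_on_concat) auto
  moreover have "(\<lambda>t. if t \<le> T\<^sub>1 then \<sigma>\<^sub>1 t else \<sigma>\<^sub>2 (t - T\<^sub>1)) ` {0..T\<^sub>1 + T\<^sub>2} \<subseteq> - ball c R"
  proof (rule image_subsetI)
    fix t assume t: "t \<in> {0..T\<^sub>1 + T\<^sub>2}"
    show "(if t \<le> T\<^sub>1 then \<sigma>\<^sub>1 t else \<sigma>\<^sub>2 (t - T\<^sub>1)) \<in> - ball c R"
    proof (cases "t \<le> T\<^sub>1")
      case True
      with t have "t \<in> {0..T\<^sub>1}" by simp
      with \<sigma>\<^sub>1(4) have "\<sigma>\<^sub>1 t \<in> - ball c R" by blast
      with True show ?thesis by simp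
    next
      case False
      with t have "t - T\<^sub>1 \<in> {0..T\<^sub>2}" by simp
      with \<sigma>\<^sub>2(4) have "\<sigma>\<^sub>2 (t - T\<^sub>1) \<in> - ball c R" by blast
      with False show ?thesis by simp
    qed
  qed
  ultimately show ?thesis
    unfolding outside_path_def using T\<^sub>1 T\<^sub>2 \<sigma>\<^sub>1(2,3) \<sigma>\<^sub>2(2,3)
    by (intro conjI exI[where x = "\<lambda>t. if t \<le> T\<^sub>1 then \<sigma>\<^sub>1 t else \<sigma>\<^sub>2 (t - T\<^sub>1)"])
       (auto simp: not_le)
qed

lemma outside_path_commute:
  assumes "outside_path R c T x y"
  shows "outside_path R c T y x"
proof -
  obtain \<sigma> where T: "0 \<le> T" and \<sigma>: "1-lipschitz_on {0..T} \<sigma>" "\<sigma> 0 = x" "\<sigma> T = y"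
    "\<sigma> ` {0..T} \<subseteq> - ball c R"
    using assms unfolding outside_path_def by blast
  have flip: "(\<lambda>t. T - t) ` {0..T} = {0..T}"
    by (auto simp: image_iff intro!: bexI[where x = "T - _"])
  have "1-lipschitz_on {0..T} (\<lambda>t. \<sigma> (T - t))"
  proof (rule lipschitz_onI)
    fix s t assume "s \<in> {0..T}" "t \<in> {0..T}"
    then show "dist (\<sigma> (T - s)) (\<sigma> (T - t)) \<le> 1 * dist s t"
      using lipschitz_onD[OF \<sigma>(1), of "T - s" "T - t"] by (auto simp: dist_real_def)
  qed simp
  moreover have "(\<lambda>t. \<sigma> (T - t)) ` {0..T} \<subseteq> - ball c R"
    using \<sigma>(4) flip by (metis image_image)
  ultimately show ?thesis
    unfolding outside_path_def using T \<sigma>(2,3) by (intro conjI exI[where x = "\<lambda>t. \<sigma> (T - t)"]) auto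
qed

lemma geod_segE:
  assumes "geod_seg x y S"
  obtains \<gamma> where "\<gamma> 0 = x" "\<gamma> (dist x y) = y"
    "\<forall>s\<in>{0..dist x y}. \<forall>t\<in>{0..dist x y}. dist (\<gamma> s) (\<gamma> t) = \<bar>s - t\<bar>"
    "S = \<gamma> ` {0..dist x y}"
  using assms unfolding geod_seg_def by blast

lemma geod_seg_refl: "geod_seg x x {x}"
  unfolding geod_seg_def by (rule exI[of _ "\<lambda>_. x"]) auto

lemma geod_seg_commute:
  assumes "geod_seg x y S"
  shows "geod_seg y x S"
proof -
  obtain \<gamma> where \<gamma>: "\<gamma> 0 = x" "\<gamma> (dist x y) = y"
    "\<forall>s\<in>{0..dist x y}. \<forall>t\<in>{0..dist x y}. dist (\<gamma> s) (\<gamma> t) = \<bar>s - t\<bar>"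
    "S = \<gamma> ` {0..dist x y}"
    by (rule geod_segE[OF assms]) blast
  define d where "d = dist x y"
  have flip: "(\<lambda>t. d - t) ` {0..d} = {0..d}"
    by (auto simp: image_iff intro!: bexI[where x = "d - _"])
  have "S = (\<lambda>t. \<gamma> (d - t)) ` {0..d}"
    using \<gamma>(4) flip by (metis d_def image_image)
  then show ?thesis
    unfolding geod_seg_def using \<gamma>(1-3)
    by (intro exI[where x = "\<lambda>t. \<gamma> (d - t)"]) (auto simp: d_def dist_commute)
qed

lemma geod_seg_ends:
  assumes "geod_seg x y S"
  shows "x \<in> S" "y \<in> S"
proof -
  obtain \<gamma> where "\<gamma> 0 = x" "\<gamma> (dist x y) = y" "S = \<gamma> ` {0..dist x y}"
    by (rule geod_segE[OF assms]) blast
  moreover have "0 \<in> {0..dist x y}" "dist x y \<in> {0..dist x y}" by auto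
  ultimately show "x \<in> S" "y \<in> S" by (metis image_eqI)+
qed

lemma geod_seg_between_ends:
  assumes "geod_seg a b S" and "p \<in> {a, b}" "q \<in> {a, b}"
  obtains S' where "geod_seg p q S'" "S' \<subseteq> S"
proof (cases "p = q")
  case True
  with assms have "{p} \<subseteq> S" using geod_seg_ends[OF assms(1)] by blast
  with True that show ?thesis using geod_seg_refl by blast
next
  case False
  with assms have "geod_seg p q S" using geod_seg_commute by blast
  with that show ?thesis by blast
qed

lemma dist_isometric_path_start:
  assumes "\<gamma> 0 = x" "\<forall>s\<in>{0..d}. \<forall>t\<in>{0..d}. dist (\<gamma> s) (\<gamma> t) = \<bar>s - t\<bar>"
    and "s \<in> {0..d}"
  shows "dist x (\<gamma> s) = s"
  using assms by force

lemma isometric_path_lipschitz: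
  assumes "\<forall>s\<in>{0..d}. \<forall>t\<in>{0..d}. dist (\<gamma> s) (\<gamma> t) = \<bar>s - t\<bar>"
  shows "1-lipschitz_on {0..d} \<gamma>"
  using assms by (intro lipschitz_onI) (auto simp: dist_real_def)

lemma geod_seg_compact:
  assumes "geod_seg x y S"
  shows "compact S"
proof -
  obtain \<gamma> where \<gamma>: "\<forall>s\<in>{0..dist x y}. \<forall>t\<in>{0..dist x y}. dist (\<gamma> s) (\<gamma> t) = \<bar>s - t\<bar>"
    "S = \<gamma> ` {0..dist x y}"
    by (rule geod_segE[OF assms]) blast
  show ?thesis
    unfolding \<gamma>(2) using isometric_path_lipschitz[OF \<gamma>(1)]
    by (intro compact_continuous_image lipschitz_on_continuous_on) auto
qed

lemma geod_seg_subset_cball: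
  assumes "geod_seg x y S"
  shows "S \<subseteq> cball x (dist x y)"
proof -
  obtain \<gamma> where \<gamma>: "\<gamma> 0 = x"
    "\<forall>s\<in>{0..dist x y}. \<forall>t\<in>{0..dist x y}. dist (\<gamma> s) (\<gamma> t) = \<bar>s - t\<bar>"
    "S = \<gamma> ` {0..dist x y}"
    by (rule geod_segE[OF assms]) blast
  show ?thesis
    unfolding \<gamma>(3) using dist_isometric_path_start[OF \<gamma>(1,2)] by auto
qed

lemma geod_seg_outside_path:
  assumes "geod_seg x y S" and "S \<subseteq> - ball c R"
  shows "outside_path R c (dist x y) x y"
proof -
  obtain \<gamma> where \<gamma>: "\<gamma> 0 = x" "\<gamma> (dist x y) = y"
    "\<forall>s\<in>{0..dist x y}. \<forall>t\<in>{0..dist x y}. dist (\<gamma> s) (\<gamma> t) = \<bar>s - t\<bar>"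
    "S = \<gamma> ` {0..dist x y}"
    by (rule geod_segE[OF assms(1)]) blast
  show ?thesis
    unfolding outside_path_def using isometric_path_lipschitz[OF \<gamma>(3)] \<gamma>(1,2,4) assms(2) by auto
qed

lemma radial_segment_outside_path:
  assumes "\<gamma> 0 = c" "\<forall>s\<in>{0..d}. \<forall>t\<in>{0..d}. dist (\<gamma> s) (\<gamma> t) = \<bar>s - t\<bar>"
    and "R \<le> s" "s \<le> t" "t \<le> d" "0 \<le> R"
  shows "outside_path R c (t - s) (\<gamma> s) (\<gamma> t)"
proof -
  have "1-lipschitz_on {0..t - s} (\<lambda>r. \<gamma> (s + r))"
    using assms(2-6) by (intro lipschitz_onI) (auto simp: dist_real_def)
  moreover have "(\<lambda>r. \<gamma> (s + r)) ` {0..t - s} \<subseteq> - ball c R"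
    using dist_isometric_path_start[OF assms(1,2)] assms(3-6) by fastforce
  ultimately show ?thesis
    unfolding outside_path_def using assms(4) by (intro conjI exI[where x = "\<lambda>r. \<gamma> (s + r)"]) auto
qed

text \<open>The ball around \<open>c\<close> is open, so points of \<open>[p,q]\<close> may lie at distance exactly \<open>R + 2\<delta>\<close>
  from \<open>c\<close>; thinness is therefore only applied to points of \<open>[c,p]\<close> strictly closer than \<open>R + \<delta>\<close>,
  and the conclusion at \<open>R + \<delta>\<close> follows by compactness of \<open>[c,q]\<close>.\<close>

lemma thin_triangle_radial_point_near:
  fixes c p q x :: "'a::metric_space"
  assumes thin: "delta_thin TYPE('a) \<delta>"
    and Sp: "geod_seg c p Sp" and Sq: "geod_seg c q Sq" and S: "geod_seg p q S"
    and far: "S \<inter> ball c (R + 2 * \<delta>) = {}"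
    and x: "x \<in> Sp" "dist c x = R + \<delta>" and pos: "0 < R + \<delta>"
  shows "\<exists>y\<in>Sq. dist x y \<le> \<delta>"
proof -
  obtain \<gamma> where \<gamma>: "\<gamma> 0 = c"
    "\<forall>s\<in>{0..dist c p}. \<forall>t\<in>{0..dist c p}. dist (\<gamma> s) (\<gamma> t) = \<bar>s - t\<bar>"
    "Sp = \<gamma> ` {0..dist c p}"
    by (rule geod_segE[OF Sp]) blast
  obtain sx where sx: "sx \<in> {0..dist c p}" "x = \<gamma> sx"
    using x(1) \<gamma>(3) by blast
  have "sx = R + \<delta>" using dist_isometric_path_start[OF \<gamma>(1,2) sx(1)] sx(2) x(2) by simp
  with sx have x_eq: "x = \<gamma> (R + \<delta>)" and R\<delta>_le: "R + \<delta> \<le> dist c p" by auto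
  have near: "\<exists>w\<in>Sq. dist (\<gamma> s) w \<le> \<delta>" if "0 \<le> s" "s < R + \<delta>" for s
  proof -
    have s: "s \<in> {0..dist c p}" using that R\<delta>_le by auto
    obtain w where w: "w \<in> S \<union> Sq" "dist (\<gamma> s) w \<le> \<delta>"
      using thin Sp S geod_seg_commute[OF Sq] \<gamma>(3) s unfolding delta_thin_def by blast
    have "dist c w < R + 2 * \<delta>"
      using dist_triangle[of c w "\<gamma> s"] dist_isometric_path_start[OF \<gamma>(1,2) s] w(2) that
      by (simp add: dist_commute)
    then have "w \<notin> S" using far by auto
    then show ?thesis using w by blast
  qed
  have "continuous_on Sq (dist x)" by (intro continuous_intros)
  then obtain y where y: "y \<in> Sq" "\<And>w. w \<in> Sq \<Longrightarrow> dist x y \<le> dist x w"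
    using continuous_attains_inf[OF geod_seg_compact[OF Sq]] geod_seg_ends(1)[OF Sq] by blast
  have "dist x y \<le> \<delta>"
  proof (rule ccontr)
    assume "\<not> dist x y \<le> \<delta>"
    define e where "e = dist x y - \<delta>"
    define s where "s = max 0 (R + \<delta> - e / 2)"
    have e: "0 < e" using \<open>\<not> dist x y \<le> \<delta>\<close> by (simp add: e_def)
    then have s: "0 \<le> s" "s < R + \<delta>" "R + \<delta> - s \<le> e / 2"
      using pos by (auto simp: s_def split: split_max)
    obtain w where w: "w \<in> Sq" "dist (\<gamma> s) w \<le> \<delta>" using near[OF s(1,2)] by blast
    have "dist x (\<gamma> s) = R + \<delta> - s"
      unfolding x_eq using \<gamma>(2) s R\<delta>_le by auto
    then have "dist x w < dist x y"
      using dist_triangle[of x w "\<gamma> s"] w(2) s(3) e by (simp add: e_def)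
    with y(2)[OF w(1)] show False by simp
  qed
  with y(1) show ?thesis by blast
qed

lemma sphere_dist_le_across_thin_triangle:
  fixes c p q u v :: "'a::metric_space"
  assumes geodesic: "geodesic_metric_space TYPE('a)"
    and thin: "delta_thin TYPE('a) \<delta>" and \<delta>: "0 < \<delta>" and R: "0 \<le> R"
    and Sp: "geod_seg c p Sp" and Sq: "geod_seg c q Sq" and S: "geod_seg p q S"
    and far: "S \<inter> ball c (R + 2 * \<delta>) = {}"
    and u: "u \<in> Sp" "dist u c = R" and v: "v \<in> Sq" "dist v c = R"
  shows "sphere_dist R c u v \<le> ereal (4 * \<delta>)"
proof -
  obtain \<alpha> where \<alpha>: "\<alpha> 0 = c"
    "\<forall>s\<in>{0..dist c p}. \<forall>t\<in>{0..dist c p}. dist (\<alpha> s) (\<alpha> t) = \<bar>s - t\<bar>"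
    "Sp = \<alpha> ` {0..dist c p}"
    by (rule geod_segE[OF Sp]) blast
  obtain \<beta> where \<beta>: "\<beta> 0 = c"
    "\<forall>s\<in>{0..dist c q}. \<forall>t\<in>{0..dist c q}. dist (\<beta> s) (\<beta> t) = \<bar>s - t\<bar>"
    "Sq = \<beta> ` {0..dist c q}"
    by (rule geod_segE[OF Sq]) blast
  have dist_\<alpha>: "dist c (\<alpha> s) = s" if "s \<in> {0..dist c p}" for s
    using dist_isometric_path_start[OF \<alpha>(1,2) that] .
  have dist_\<beta>: "dist c (\<beta> s) = s" if "s \<in> {0..dist c q}" for s
    using dist_isometric_path_start[OF \<beta>(1,2) that] .
  have far_p: "R + 2 * \<delta> \<le> dist c p"
    using far geod_seg_ends(1)[OF S] by auto
  obtain su where "su \<in> {0..dist c p}" "u = \<alpha> su" using u(1) \<alpha>(3) by blast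
  with u(2) dist_\<alpha> have u_eq: "u = \<alpha> R" by (auto simp: dist_commute)
  obtain sv where "sv \<in> {0..dist c q}" "v = \<beta> sv" using v(1) \<beta>(3) by blast
  with v(2) dist_\<beta> have v_eq: "v = \<beta> R" by (auto simp: dist_commute)
  define u' where "u' = \<alpha> (R + \<delta>)"
  have u': "u' \<in> Sp" "dist c u' = R + \<delta>"
    using far_p \<delta> R dist_\<alpha> \<alpha>(3) by (auto simp: u'_def)
  obtain y where y: "y \<in> Sq" "dist u' y \<le> \<delta>"
    using thin_triangle_radial_point_near[OF thin Sp Sq S far u'] \<delta> R by auto
  obtain r where r: "r \<in> {0..dist c q}" "y = \<beta> r" using y(1) \<beta>(3) by blast
  have r_bounds: "R \<le> r" "r \<le> R + 2 * \<delta>"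
    using dist_triangle[of c u' y] dist_triangle[of c y u'] u'(2) y(2) dist_\<beta>[OF r(1)] r(2)
    by (simp_all add: dist_commute)
  have "outside_path R c \<delta> u u'"
    using radial_segment_outside_path[OF \<alpha>(1,2), where s = R and t = "R + \<delta>"] far_p \<delta> R
    by (simp add: u_eq u'_def)
  moreover obtain J where J: "geod_seg u' y J"
    using geodesic unfolding geodesic_metric_space_def by blast
  have "J \<subseteq> - ball c R"
  proof
    fix w assume "w \<in> J"
    then have "dist u' w \<le> \<delta>" using geod_seg_subset_cball[OF J] y(2) by auto
    then show "w \<in> - ball c R" using dist_triangle[of c u' w] u'(2) by (auto simp: dist_commute)
  qed
  then have "outside_path R c (dist u' y) u' y"
    by (rule geod_seg_outside_path[OF J])
  moreover have "outside_path R c (r - R) y v"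
    using outside_path_commute[OF radial_segment_outside_path[OF \<beta>(1,2), where s = R and t = r]]
      r r_bounds R by (simp add: r(2) v_eq)
  ultimately have "outside_path R c (\<delta> + dist u' y + (r - R)) u v"
    by (blast intro: outside_path_trans)
  then have "sphere_dist R c u v \<le> ereal (\<delta> + dist u' y + (r - R))"
    by (rule outside_path_sphere_dist)
  also have "\<dots> \<le> ereal (4 * \<delta>)"
    using y(2) r_bounds by simp
  finally show ?thesis .
qed

lemma proj_dist_le_if_geodesic_avoids_ball:
  fixes a b c :: "'a::metric_space"
  assumes geodesic: "geodesic_metric_space TYPE('a)"
    and thin: "delta_thin TYPE('a) \<delta>" and \<delta>: "0 < \<delta>" and R: "0 \<le> R"
    and Sab: "geod_seg a b Sab" and far: "Sab \<inter> ball c (R + 2 * \<delta>) = {}"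
  shows "proj_dist R c a b \<le> ereal (4 * \<delta>)"
proof -
  have on_radial_geodesic: "\<exists>p\<in>{a, b}. \<exists>Sp. geod_seg c p Sp \<and> u \<in> Sp \<and> dist u c = R"
    if "u \<in> sphere_proj R c a \<union> sphere_proj R c b" for u
    using that unfolding sphere_proj_def by auto
  have "sphere_dist R c u v \<le> ereal (4 * \<delta>)"
    if u: "u \<in> sphere_proj R c a \<union> sphere_proj R c b"
      and v: "v \<in> sphere_proj R c a \<union> sphere_proj R c b" for u v
  proof -
    obtain p Sp where p: "p \<in> {a, b}" "geod_seg c p Sp" "u \<in> Sp" "dist u c = R"
      using on_radial_geodesic[OF u] by blast
    obtain q Sq where q: "q \<in> {a, b}" "geod_seg c q Sq" "v \<in> Sq" "dist v c = R"
      using on_radial_geodesic[OF v] by blast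
    obtain S where S: "geod_seg p q S" "S \<subseteq> Sab"
      using geod_seg_between_ends[OF Sab p(1) q(1)] .
    with far have "S \<inter> ball c (R + 2 * \<delta>) = {}" by blast
    with S(1) show ?thesis
      by (rule sphere_dist_le_across_thin_triangle[OF geodesic thin \<delta> R p(2) q(2) _ _ p(3,4) q(3,4)])
  qed
  then show ?thesis
    unfolding proj_dist_def by (intro Sup_least) auto
qed

theorem lemma3p4:
  fixes \<delta> \<rho> R :: real
    and a b c :: "'a::metric_space"
    and G :: "('g, 'b) monoid_scheme"
    and act :: "'g \<Rightarrow> 'a \<Rightarrow> 'a"
    and C :: "'a set"
    and Gc :: "'a \<Rightarrow> 'g set"
    and Sab :: "'a set"
  assumes "geodesic_metric_space TYPE('a)"
    and "\<delta> > 0"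
    and "delta_thin TYPE('a) \<delta>"
    and "isom_action G act"
    and "fairly_rotating_family G act C Gc \<rho>"
    and "\<rho> \<ge> 20 * \<delta>"
    and "2 + 2 * \<delta> \<le> R" and "R \<le> \<rho> / 2 - 3 * \<delta>"
    and "c \<in> C"
    and "geod_seg a b Sab"
    and "Sab \<inter> ball c (R + 2 * \<delta>) = {}"
  shows "proj_dist R c a b \<le> ereal (4 * \<delta>)"
proof (rule proj_dist_le_if_geodesic_avoids_ball)
  show "0 \<le> R" using assms(2,7) by linarith
qed (use assms in auto)

end
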